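(* Let $\boldsymbol H:\mathbb T^N\to\mathbb T^N$ satisfy Assumptions (H1) and (H2), let $N$ be sufficiently large, fix $i\in[1,N]$, let $\boldsymbol\Phi_i$ be the diffeomorphism described below, and define $G_i(y_i;\hat{\boldsymbol y}_i):=H_i(\boldsymbol\Phi_i(y_i;\hat{\boldsymbol y}_i))$. Then there is $\mathcal K_\#$ depending only on $E,\kappa,K$ such that $$d_{C^2}\big(G_i(\cdot;\hat{\boldsymbol x}_i),\,H_i(\cdot;\hat{\boldsymbol x}_i)\big)\le\mathcal K_\#N^{-1}\qquad\forall\hat{\boldsymbol x}_i\in\mathbb T^{N-1}.$$
   Context: $\mathbb T=\mathbb R/\mathbb Z$; derivatives via lifts; $d_{C^2}$ between circle maps is the max of sup-distances of lifts and of their first two derivatives. $\boldsymbol x=(x_i;\hat{\boldsymbol x}_i)$; $H_i$ is the $i$-th component of $\boldsymbol H$, $\hat{\boldsymbol H}_i$ the others. Assumption (H1), datum $(E,\kappa)$, $\kappa-E>1$: $\boldsymbol H\in C^1$, $|\partial_iH_i|>\kappa$, $|\partial_jH_i|<EN^{-1}$ for $j\ne i$. Assumption (H2), datum $(E,K)$: $\boldsymbol H\in C^3$, $|\partial_i^2H_i|\le K$, $|\partial_k\partial_jH_i|\le EN^{-1}$ if $j\ne i$ and $\le EN^{-2}$ if $i,j,k$ distinct, and for distinct $\ell,j,k$: $|\partial_\ell\partial_j^2H_j|\le EN^{-1}$, $|\partial_\ell\partial_k\partial_jH_j|\le EN^{-2}$. Under (H1), for $N$ large, there is a diffeomorphism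 $\boldsymbol\Phi_i:\mathbb T\times\mathbb T^{N-1}\to\mathbb T^N$ with $\Phi_{i,i}(y_i;\hat{\boldsymbol y}_i)=y_i$ and $\hat{\boldsymbol H}_i(\boldsymbol\Phi_i(y_i;\hat{\boldsymbol y}_i))=\hat{\boldsymbol H}_i(0;\hat{\boldsymbol y}_i)$, whose images of the circles $\mathbb T\times\{\hat{\boldsymbol y}_i\}$ are the connected components of the preimages $\boldsymbol H^{-1}(\{(x;\hat{\boldsymbol x}_i):x\in\mathbb T\})$, each homotopic to $\mathbb T\times\{\hat{\boldsymbol y}_i\}$; under (H2) it satisfies $|\partial_i\Phi_{i,m}|_\infty\le\mathcal K_\#N^{-1}$ for $m\ne i$. *)

theory Defs
  imports "HOL-Analysis.Analysis"
begin

text \<open>Points of R^N are encoded as functions nat => real; only the coordinates j < N matter.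
  Maps of the torus T^N are encoded by their lifts R^N -> R^N.\<close>

definition same_upto :: "nat \<Rightarrow> (nat \<Rightarrow> real) \<Rightarrow> (nat \<Rightarrow> real) \<Rightarrow> bool" where
  "same_upto N x y \<longleftrightarrow> (\<forall>j<N. x j = y j)"

definition pd :: "nat \<Rightarrow> ((nat \<Rightarrow> real) \<Rightarrow> real) \<Rightarrow> (nat \<Rightarrow> real) \<Rightarrow> real" where
  "pd j f = (\<lambda>x. deriv (\<lambda>t. f (x(j := t))) (x j))"

definition Ck :: "nat \<Rightarrow> nat \<Rightarrow> ((nat \<Rightarrow> real) \<Rightarrow> real) \<Rightarrow> bool" where
  "Ck N k f \<longleftrightarrow>
     (\<forall>x y. same_upto N x y \<longrightarrow> f x = f y) \<and>
     (\<forall>js. length js \<le> k \<and> set js \<subseteq> {..<N} \<longrightarrow>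
        continuous_on UNIV (foldr pd js f) \<and>
        (length js < k \<longrightarrow>
           (\<forall>j<N. \<forall>x. (\<lambda>t. foldr pd js f (x(j := t))) differentiable (at (x j)))))"

text \<open>F : R^N -> R^N is (the lift of) a C^k map of the torus T^N = R^N / Z^N.\<close>
definition torus_map_lift :: "nat \<Rightarrow> nat \<Rightarrow> ((nat \<Rightarrow> real) \<Rightarrow> (nat \<Rightarrow> real)) \<Rightarrow> bool" where
  "torus_map_lift N k F \<longleftrightarrow>
     (\<forall>m<N. Ck N k (\<lambda>x. F x m)) \<and>
     (\<forall>x j m. j < N \<and> m < N \<longrightarrow> F (x(j := x j + 1)) m - F x m \<in> \<int>)"

definition H1 :: "nat \<Rightarrow> real \<Rightarrow> real \<Rightarrow> ((nat \<Rightarrow> real) \<Rightarrow> (nat \<Rightarrow> real)) \<Rightarrow> bool" where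
  "H1 N E \<kappa> F \<longleftrightarrow>
     torus_map_lift N 1 F \<and>
     (\<forall>i<N. \<forall>x. \<bar>pd i (\<lambda>z. F z i) x\<bar> > \<kappa>) \<and>
     (\<forall>i<N. \<forall>j<N. \<forall>x. j \<noteq> i \<longrightarrow> \<bar>pd j (\<lambda>z. F z i) x\<bar> < E / real N)"

definition H2 :: "nat \<Rightarrow> real \<Rightarrow> real \<Rightarrow> ((nat \<Rightarrow> real) \<Rightarrow> (nat \<Rightarrow> real)) \<Rightarrow> bool" where
  "H2 N E K F \<longleftrightarrow>
     torus_map_lift N 3 F \<and>
     (\<forall>i<N. \<forall>x. \<bar>pd i (pd i (\<lambda>z. F z i)) x\<bar> \<le> K) \<and>
     (\<forall>i<N. \<forall>j<N. \<forall>k<N. \<forall>x. j \<noteq> i \<longrightarrow>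
        \<bar>pd k (pd j (\<lambda>z. F z i)) x\<bar> \<le> E / real N) \<and>
     (\<forall>i<N. \<forall>j<N. \<forall>k<N. \<forall>x. i \<noteq> j \<and> i \<noteq> k \<and> j \<noteq> k \<longrightarrow>
        \<bar>pd k (pd j (\<lambda>z. F z i)) x\<bar> \<le> E / (real N)\<^sup>2) \<and>
     (\<forall>l<N. \<forall>j<N. \<forall>k<N. \<forall>x. l \<noteq> j \<and> l \<noteq> k \<and> j \<noteq> k \<longrightarrow>
        \<bar>pd l (pd j (pd j (\<lambda>z. F z j))) x\<bar> \<le> E / real N \<and>
        \<bar>pd l (pd k (pd j (\<lambda>z. F z j))) x\<bar> \<le> E / (real N)\<^sup>2)"

text \<open>P is the lift of the diffeomorphism Phi_i: in the argument y, the coordinate y i plays the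
  role of y_i and the other coordinates that of hat y_i.\<close>
definition Phi_lift :: "nat \<Rightarrow> ((nat \<Rightarrow> real) \<Rightarrow> (nat \<Rightarrow> real)) \<Rightarrow> nat \<Rightarrow>
    ((nat \<Rightarrow> real) \<Rightarrow> (nat \<Rightarrow> real)) \<Rightarrow> bool" where
  "Phi_lift N F i P \<longleftrightarrow>
     torus_map_lift N 2 P \<and>
     (\<forall>y. P y i = y i) \<and>
     (\<forall>y. same_upto N (P (y(i := 0))) (y(i := 0))) \<and>
     (\<forall>y m. m < N \<and> m \<noteq> i \<longrightarrow> F (P y) m = F (y(i := 0)) m)"

text \<open>C^2 distance between two circle maps, given by lifts g and h (independent of the lifts
  chosen: the C^0 part is minimised over integer shifts). Value in ereal (may be infinite).\<close>
definition dC2 :: "(real \<Rightarrow> real) \<Rightarrow> (real \<Rightarrow> real) \<Rightarrow> ereal" where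
  "dC2 g h = (INF k\<in>(\<int>::real set). SUP t\<in>(UNIV::real set).
      ereal (max \<bar>g t - h t - k\<bar>
             (max \<bar>deriv g t - deriv h t\<bar> \<bar>deriv (deriv g) t - deriv (deriv h) t\<bar>)))"

end

theory Submission
  imports Defs
begin

text \<open>Let \<open>x'\<close> be the coordinates of \<open>x\<close> other than the \<open>i\<close>-th and \<open>\<Phi>(t) = \<Phi>\<^sub>i(t; x')\<close>.
  For \<open>m \<noteq> i\<close> the components \<open>H\<^sub>m \<circ> \<Phi>\<close> are constant; differentiating once and twice gives
  linear systems for the derivatives of the coordinates \<open>\<Phi>\<^sub>j\<close>, \<open>j \<noteq> i\<close>, whose matrix
  \<open>(\<partial>\<^sub>jH\<^sub>m)\<close> is diagonally dominant by (H1), so together with (H2) these derivatives are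
  \<open>O(1/N)\<close>. Since \<open>\<Phi>\<close> lifts a torus map and \<open>\<Phi>(0) = (0; x')\<close>, periodicity keeps each \<open>\<Phi>\<^sub>j\<close>
  within \<open>O(1/N)\<close> of \<open>x\<^sub>j\<close>. Comparing \<open>G\<^sub>i = H\<^sub>i \<circ> \<Phi>\<close> and its first two derivatives with those
  of \<open>H\<^sub>i\<close> along the line, one coordinate at a time, each of the \<open>N\<close> coordinates then
  contributes \<open>O(1/N\<^sup>2)\<close>.\<close>

section \<open>Calculus of functions of finitely many coordinates\<close>

lemma pd_same_upto:
  assumes "\<And>x y. same_upto N x y \<Longrightarrow> f x = f y" "j < N" "same_upto N x y"
  shows "pd j f x = pd j f y"
proof -
  have "x j = y j" "(\<lambda>t. f (x(j := t))) = (\<lambda>t. f (y(j := t)))"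
    using assms unfolding same_upto_def by auto
  then show ?thesis by (simp add: pd_def)
qed

lemma Ck_same_upto: "Ck N k f \<Longrightarrow> same_upto N x y \<Longrightarrow> f x = f y"
  by (simp add: Ck_def)

lemma CkD:
  assumes "Ck N k f" "length js \<le> k" "set js \<subseteq> {..<N}"
  shows "continuous_on UNIV (foldr pd js f)"
    and "length js < k \<Longrightarrow> j < N \<Longrightarrow> (\<lambda>t. foldr pd js f (x(j := t))) differentiable (at (x j))"
  using assms unfolding Ck_def by blast+

lemma Ck_continuous: "Ck N k f \<Longrightarrow> continuous_on UNIV f"
  using CkD(1)[of N k f "[]"] by simp

lemma Ck_Suc_pd:
  assumes f: "Ck N (Suc k) f" and j: "j < N"
  shows "Ck N k (pd j f)"
  unfolding Ck_def
proof (intro conjI allI impI)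
  fix x y assume "same_upto N x y"
  with Ck_same_upto[OF f] j show "pd j f x = pd j f y" by (rule pd_same_upto)
next
  fix js :: "nat list" assume js: "length js \<le> k \<and> set js \<subseteq> {..<N}"
  then have js': "length (js @ [j]) \<le> Suc k" "set (js @ [j]) \<subseteq> {..<N}" using j by auto
  then show "continuous_on UNIV (foldr pd js (pd j f))"
    using CkD(1)[OF f js'] by simp
  assume "length js < k"
  fix l x assume "l < N"
  show "(\<lambda>t. foldr pd js (pd j f) (x(l := t))) differentiable (at (x l))"
    using CkD(2)[OF f js', of l x] \<open>length js < k\<close> \<open>l < N\<close> by simp
qed

lemma Ck_has_pd:
  assumes "Ck N (Suc k) f" "j < N"
  shows "((\<lambda>t. f (z(j := t))) has_real_derivative pd j f (z(j := s))) (at s)"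
proof -
  have "(\<lambda>t. f ((z(j := s))(j := t))) differentiable (at ((z(j := s)) j))"
    using CkD(2)[OF assms(1), of "[]" j "z(j := s)"] assms(2) by simp
  then show ?thesis by (simp add: pd_def DERIV_deriv_iff_real_differentiable)
qed

lemma Ck_coordinate_mvt:
  assumes "Ck N (Suc k) f" "j < N"
  obtains \<xi> where "f (z(j := b)) - f (z(j := a)) = pd j f (z(j := \<xi>)) * (b - a)"
    and "\<bar>\<xi> - a\<bar> \<le> \<bar>b - a\<bar>"
proof -
  note D = Ck_has_pd[OF assms, of z]
  consider "a < b" | "a = b" | "b < a" by linarith
  then show ?thesis
  proof cases
    case 1
    have "\<exists>\<xi>>a. \<xi> < b \<and> f (z(j := b)) - f (z(j := a)) = (b - a) * pd j f (z(j := \<xi>))"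
      by (rule MVT2[OF 1]) (rule D)
    then obtain \<xi> where "a < \<xi>" "\<xi> < b"
      "f (z(j := b)) - f (z(j := a)) = (b - a) * pd j f (z(j := \<xi>))" by blast
    then show ?thesis by (intro that[of \<xi>]) (auto simp: mult.commute)
  next
    case 2
    then show ?thesis by (intro that[of a]) auto
  next
    case 3
    have "\<exists>\<xi>>b. \<xi> < a \<and> f (z(j := a)) - f (z(j := b)) = (a - b) * pd j f (z(j := \<xi>))"
      by (rule MVT2[OF 3]) (rule D)
    then obtain \<xi> where "b < \<xi>" "\<xi> < a"
      "f (z(j := a)) - f (z(j := b)) = (a - b) * pd j f (z(j := \<xi>))" by blast
    then show ?thesis by (intro that[of \<xi>]) (auto simp: algebra_simps)
  qed
qed

definition coord_path :: "(nat \<Rightarrow> real) \<Rightarrow> (nat \<Rightarrow> real) \<Rightarrow> nat \<Rightarrow> nat \<Rightarrow> real" where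
  "coord_path z w n = (\<lambda>j. if j < n then z j else w j)"

lemma Ck_telescope:
  assumes "Ck N k f"
  shows "f z - f w =
    (\<Sum>n<N. f ((coord_path z w n)(n := z n)) - f ((coord_path z w n)(n := w n)))"
proof -
  have "(coord_path z w n)(n := z n) = coord_path z w (Suc n)"
    "(coord_path z w n)(n := w n) = coord_path z w n" for n
    unfolding coord_path_def by (auto simp: less_Suc_eq)
  moreover have "f (coord_path z w N) = f z"
    using Ck_same_upto[OF assms] unfolding same_upto_def coord_path_def by auto
  moreover have "coord_path z w 0 = w" unfolding coord_path_def by simp
  ultimately show ?thesis by (simp add: sum_lessThan_telescope[of "\<lambda>n. f (coord_path z w n)"])
qed

lemma Ck_telescope_mvt:
  assumes f: "Ck N (Suc k) f"
  shows "\<exists>\<xi>. f z - f w = (\<Sum>n<N. pd n f ((coord_path z w n)(n := \<xi> n)) * (z n - w n))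
    \<and> (\<forall>n<N. \<bar>\<xi> n - w n\<bar> \<le> \<bar>z n - w n\<bar>)"
proof -
  have "\<forall>n. \<exists>\<xi>. n < N \<longrightarrow>
      f ((coord_path z w n)(n := z n)) - f ((coord_path z w n)(n := w n))
        = pd n f ((coord_path z w n)(n := \<xi>)) * (z n - w n) \<and> \<bar>\<xi> - w n\<bar> \<le> \<bar>z n - w n\<bar>"
    by (metis Ck_coordinate_mvt[OF f])
  then obtain \<xi> where \<xi>: "\<And>n. n < N \<Longrightarrow>
      f ((coord_path z w n)(n := z n)) - f ((coord_path z w n)(n := w n))
        = pd n f ((coord_path z w n)(n := \<xi> n)) * (z n - w n)"
    "\<And>n. n < N \<Longrightarrow> \<bar>\<xi> n - w n\<bar> \<le> \<bar>z n - w n\<bar>"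
    by metis
  have "f z - f w = (\<Sum>n<N. pd n f ((coord_path z w n)(n := \<xi> n)) * (z n - w n))"
    unfolding Ck_telescope[OF f, of z w] by (intro sum.cong) (simp_all add: \<xi>(1))
  with \<xi>(2) show ?thesis by blast
qed

lemma Ck_abs_diff_le:
  assumes f: "Ck N (Suc k) f"
    and B: "\<And>j u. j < N \<Longrightarrow> z j \<noteq> w j \<Longrightarrow> \<bar>pd j f u\<bar> \<le> B j"
  shows "\<bar>f z - f w\<bar> \<le> (\<Sum>j<N. B j * \<bar>z j - w j\<bar>)"
proof -
  obtain \<xi> where eq: "f z - f w = (\<Sum>n<N. pd n f ((coord_path z w n)(n := \<xi> n)) * (z n - w n))"
    using Ck_telescope_mvt[OF f, of z w] by blast
  have "\<bar>pd n f ((coord_path z w n)(n := \<xi> n)) * (z n - w n)\<bar> \<le> B n * \<bar>z n - w n\<bar>" if "n < N" for n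
    using B[OF that] by (cases "z n = w n") (simp_all add: abs_mult mult_right_mono)
  then show ?thesis
    unfolding eq by (intro order_trans[OF sum_abs sum_mono]) simp
qed

lemma tendsto_fun_componentwise:
  fixes g :: "'a \<Rightarrow> nat \<Rightarrow> real"
  assumes "\<And>j. ((\<lambda>x. g x j) \<longlongrightarrow> l j) F"
  shows "(g \<longlongrightarrow> l) F"
proof -
  have "limitin (product_topology (\<lambda>j. euclidean) UNIV) g l F"
    unfolding limitin_componentwise using assms by simp
  then show ?thesis by (simp add: euclidean_product_topology)
qed

text \<open>The space \<open>nat \<Rightarrow> real\<close> carries the product topology and no norm, so the chain rule is
  proved by hand: the difference quotient is telescoped coordinatewise, each step being a mean
  value whose intermediate point tends to \<open>c t\<close>.\<close>

lemma Ck_chain_rule: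
  assumes f: "Ck N (Suc k) f"
    and c: "\<And>j. j < N \<Longrightarrow> ((\<lambda>s. c s j) has_real_derivative d j) (at t)"
  shows "((\<lambda>s. f (c s)) has_real_derivative (\<Sum>j<N. pd j f (c t) * d j)) (at t)"
proof -
  define u where "u s n = coord_path (c s) (c t) n" for s n
  have "\<forall>s. \<exists>\<xi>. f (c s) - f (c t) = (\<Sum>n<N. pd n f ((u s n)(n := \<xi> n)) * (c s n - c t n))
      \<and> (\<forall>n<N. \<bar>\<xi> n - c t n\<bar> \<le> \<bar>c s n - c t n\<bar>)"
    unfolding u_def by (intro allI Ck_telescope_mvt[OF f])
  then obtain \<xi> where "\<forall>s. f (c s) - f (c t) = (\<Sum>n<N. pd n f ((u s n)(n := \<xi> s n)) * (c s n - c t n))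
      \<and> (\<forall>n<N. \<bar>\<xi> s n - c t n\<bar> \<le> \<bar>c s n - c t n\<bar>)"
    by (rule choice[THEN exE])
  then have \<xi>: "\<And>s. f (c s) - f (c t) = (\<Sum>n<N. pd n f ((u s n)(n := \<xi> s n)) * (c s n - c t n))"
    and \<xi>_le: "\<And>s n. n < N \<Longrightarrow> \<bar>\<xi> s n - c t n\<bar> \<le> \<bar>c s n - c t n\<bar>"
    by blast+
  have c_lim: "((\<lambda>s. c s j) \<longlongrightarrow> c t j) (at t)" if "j < N" for j
    using DERIV_isCont[OF c[OF that]] by (simp add: isCont_def)
  have \<xi>_lim: "((\<lambda>s. \<xi> s n) \<longlongrightarrow> c t n) (at t)" if n: "n < N" for n
  proof -
    have "((\<lambda>s. \<bar>c s n - c t n\<bar>) \<longlongrightarrow> 0) (at t)"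
      using c_lim[OF n] by (simp add: tendsto_rabs_zero Lim_null[symmetric])
    then have "((\<lambda>s. \<xi> s n - c t n) \<longlongrightarrow> 0) (at t)"
      by (rule Lim_null_comparison[rotated]) (use \<xi>_le[OF n] in auto)
    then show ?thesis by (simp add: Lim_null[symmetric])
  qed
  have "((\<lambda>s. (u s n)(n := \<xi> s n)) \<longlongrightarrow> c t) (at t)" if n: "n < N" for n
  proof (rule tendsto_fun_componentwise)
    fix j
    show "((\<lambda>s. ((u s n)(n := \<xi> s n)) j) \<longlongrightarrow> c t j) (at t)"
      using \<xi>_lim[OF n] c_lim[of j] n
      by (cases "j = n"; cases "j < n") (auto simp: u_def coord_path_def)
  qed
  moreover have "isCont (pd n f) (c t)" if "n < N" for n
    using Ck_continuous[OF Ck_Suc_pd[OF f that]] by (simp add: continuous_on_eq_continuous_at)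
  ultimately have pd_lim: "((\<lambda>s. pd n f ((u s n)(n := \<xi> s n))) \<longlongrightarrow> pd n f (c t)) (at t)"
    if "n < N" for n
    using that isCont_tendsto_compose by blast
  have quot_lim: "((\<lambda>s. (c s n - c t n) / (s - t)) \<longlongrightarrow> d n) (at t)" if "n < N" for n
    using c[OF that] by (simp add: has_field_derivative_iff)
  have "(f (c s) - f (c t)) / (s - t) =
      (\<Sum>n<N. pd n f ((u s n)(n := \<xi> s n)) * ((c s n - c t n) / (s - t)))" for s
    unfolding \<xi> sum_divide_distrib by simp
  then show ?thesis
    unfolding has_field_derivative_iff by (simp only:) (intro tendsto_sum tendsto_mult pd_lim quot_lim; simp)
qed

lemma second_difference_mvt:
  fixes \<phi> :: "real \<Rightarrow> real \<Rightarrow> real"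
  assumes d1: "\<And>s r. ((\<lambda>s. \<phi> s r) has_real_derivative \<phi>s s r) (at s)"
    and d12: "\<And>s r. ((\<lambda>r. \<phi>s s r) has_real_derivative A s r) (at r)"
    and h: "h > 0"
  obtains \<xi> \<eta> where "a < \<xi>" "\<xi> < a + h" "b < \<eta>" "\<eta> < b + h"
    and "\<phi> (a + h) (b + h) - \<phi> (a + h) b - \<phi> a (b + h) + \<phi> a b = h * h * A \<xi> \<eta>"
proof -
  have "\<exists>\<xi>>a. \<xi> < a + h \<and> (\<phi> (a + h) (b + h) - \<phi> (a + h) b) - (\<phi> a (b + h) - \<phi> a b)
      = (a + h - a) * (\<phi>s \<xi> (b + h) - \<phi>s \<xi> b)"
    using h by (intro MVT2 DERIV_diff d1) auto
  then obtain \<xi> where \<xi>: "a < \<xi>" "\<xi> < a + h"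
    "\<phi> (a + h) (b + h) - \<phi> (a + h) b - \<phi> a (b + h) + \<phi> a b = h * (\<phi>s \<xi> (b + h) - \<phi>s \<xi> b)"
    by (auto simp: algebra_simps)
  have "\<exists>\<eta>>b. \<eta> < b + h \<and> \<phi>s \<xi> (b + h) - \<phi>s \<xi> b = (b + h - b) * A \<xi> \<eta>"
    using h by (intro MVT2 d12) auto
  then obtain \<eta> where "b < \<eta>" "\<eta> < b + h" "\<phi>s \<xi> (b + h) - \<phi>s \<xi> b = h * A \<xi> \<eta>"
    by auto
  with \<xi> show ?thesis by (intro that[of \<xi> \<eta>]) auto
qed

lemma continuous_on_curried_near:
  fixes A :: "real \<Rightarrow> real \<Rightarrow> real"
  assumes "continuous_on UNIV (\<lambda>p. A (fst p) (snd p))" "e > 0"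
  obtains d where "d > 0" "\<And>s r. \<bar>s - a\<bar> < d \<Longrightarrow> \<bar>r - b\<bar> < d \<Longrightarrow> \<bar>A s r - A a b\<bar> < e"
proof -
  obtain d where d: "d > 0" "\<And>p. dist p (a, b) < d \<Longrightarrow> dist (A (fst p) (snd p)) (A a b) < e"
    using assms unfolding continuous_on_iff by (metis UNIV_I fst_conv snd_conv)
  have "\<bar>A s r - A a b\<bar> < e" if "\<bar>s - a\<bar> < d / 2" "\<bar>r - b\<bar> < d / 2" for s r
  proof -
    have "dist (s, r) (a, b) \<le> norm (s - a) + norm (r - b)"
      using norm_Pair_le[of "s - a" "r - b"] by (simp add: dist_norm)
    then show ?thesis using d(2)[of "(s, r)"] that by (simp add: dist_real_def)
  qed
  with d(1) show ?thesis by (intro that[of "d / 2"]) auto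
qed

lemma mixed_partials_eq:
  fixes \<phi> :: "real \<Rightarrow> real \<Rightarrow> real"
  assumes d1: "\<And>s r. ((\<lambda>s. \<phi> s r) has_real_derivative \<phi>s s r) (at s)"
    and d2: "\<And>s r. ((\<lambda>r. \<phi> s r) has_real_derivative \<phi>r s r) (at r)"
    and d12: "\<And>s r. ((\<lambda>r. \<phi>s s r) has_real_derivative A s r) (at r)"
    and d21: "\<And>s r. ((\<lambda>s. \<phi>r s r) has_real_derivative B s r) (at s)"
    and cA: "continuous_on UNIV (\<lambda>p. A (fst p) (snd p))"
    and cB: "continuous_on UNIV (\<lambda>p. B (fst p) (snd p))"
  shows "A a b = B a b"
proof (rule ccontr)
  assume "A a b \<noteq> B a b"
  then have e: "\<bar>A a b - B a b\<bar> / 2 > 0" by simp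
  obtain dA where dA: "dA > 0"
    "\<And>s r. \<bar>s - a\<bar> < dA \<Longrightarrow> \<bar>r - b\<bar> < dA \<Longrightarrow> \<bar>A s r - A a b\<bar> < \<bar>A a b - B a b\<bar> / 2"
    using continuous_on_curried_near[OF cA e] by blast
  obtain dB where dB: "dB > 0"
    "\<And>s r. \<bar>s - a\<bar> < dB \<Longrightarrow> \<bar>r - b\<bar> < dB \<Longrightarrow> \<bar>B s r - B a b\<bar> < \<bar>A a b - B a b\<bar> / 2"
    using continuous_on_curried_near[OF cB e] by blast
  define h where "h = min dA dB"
  have h: "h > 0" using dA dB by (simp add: h_def)
  obtain \<xi> \<eta> where "a < \<xi>" "\<xi> < a + h" "b < \<eta>" "\<eta> < b + h"
    and \<Delta>A: "\<phi> (a + h) (b + h) - \<phi> (a + h) b - \<phi> a (b + h) + \<phi> a b = h * h * A \<xi> \<eta>"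
    using second_difference_mvt[OF d1 d12 h] .
  then have A: "\<bar>A \<xi> \<eta> - A a b\<bar> < \<bar>A a b - B a b\<bar> / 2"
    by (intro dA(2)) (auto simp: h_def)
  \<comment> \<open>the same second difference, expanded with the roles of the two variables exchanged\<close>
  obtain \<eta>' \<xi>' where "b < \<eta>'" "\<eta>' < b + h" "a < \<xi>'" "\<xi>' < a + h"
    and \<Delta>B: "\<phi> (a + h) (b + h) - \<phi> a (b + h) - \<phi> (a + h) b + \<phi> a b = h * h * B \<xi>' \<eta>'"
    using second_difference_mvt[of "\<lambda>r s. \<phi> s r" "\<lambda>r s. \<phi>r s r" "\<lambda>r s. B s r", OF d2 d21 h] .
  then have B: "\<bar>B \<xi>' \<eta>' - B a b\<bar> < \<bar>A a b - B a b\<bar> / 2"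
    by (intro dB(2)) (auto simp: h_def)
  have "h * h * A \<xi> \<eta> = h * h * B \<xi>' \<eta>'" using \<Delta>A \<Delta>B by linarith
  then have "A \<xi> \<eta> = B \<xi>' \<eta>'" using h by simp
  with A B show False by (simp add: abs_less_iff abs_if split: if_splits)
qed

lemma Ck_pd_commute:
  assumes f: "Ck N (Suc (Suc k)) f" and j: "j < N" and l: "l < N"
  shows "pd l (pd j f) x = pd j (pd l f) x"
proof (cases "j = l")
  case False
  define X where "X s r = x(j := s, l := r)" for s r
  have Xj: "(X s r)(j := s') = X s' r" and Xl: "(X s r)(l := r') = X s r'" for s r s' r'
    using False unfolding X_def by auto
  have cont_X: "continuous_on UNIV (\<lambda>p. X (fst p) (snd p))"
    unfolding X_def
  proof (intro continuous_on_coordinatewise_then_product)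
    fix i
    show "continuous_on UNIV (\<lambda>p. (x(j := fst p, l := snd p)) i)"
      by (cases "i = l"; cases "i = j") (auto intro!: continuous_on_fst continuous_on_snd continuous_on_id)
  qed
  have fj: "Ck N (Suc k) (pd j f)" and fl: "Ck N (Suc k) (pd l f)"
    using Ck_Suc_pd[OF f] j l by auto
  have "pd l (pd j f) (X (x j) (x l)) = pd j (pd l f) (X (x j) (x l))"
  proof (rule mixed_partials_eq[where \<phi> = "\<lambda>s r. f (X s r)" and \<phi>s = "\<lambda>s r. pd j f (X s r)"
        and \<phi>r = "\<lambda>s r. pd l f (X s r)" and A = "\<lambda>s r. pd l (pd j f) (X s r)"
        and B = "\<lambda>s r. pd j (pd l f) (X s r)"])
    show "((\<lambda>s. f (X s r)) has_real_derivative pd j f (X s r)) (at s)" for s r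
      using Ck_has_pd[OF f j, of "X 0 r" s] by (simp add: Xj)
    show "((\<lambda>r. f (X s r)) has_real_derivative pd l f (X s r)) (at r)" for s r
      using Ck_has_pd[OF f l, of "X s 0" r] by (simp add: Xl)
    show "((\<lambda>r. pd j f (X s r)) has_real_derivative pd l (pd j f) (X s r)) (at r)" for s r
      using Ck_has_pd[OF fj l, of "X s 0" r] by (simp add: Xl)
    show "((\<lambda>s. pd l f (X s r)) has_real_derivative pd j (pd l f) (X s r)) (at s)" for s r
      using Ck_has_pd[OF fl j, of "X 0 r" s] by (simp add: Xj)
    show "continuous_on UNIV (\<lambda>p. pd l (pd j f) (X (fst p) (snd p)))"
      using Ck_continuous[OF Ck_Suc_pd[OF fj l]] cont_X by (rule continuous_on_compose2) auto
    show "continuous_on UNIV (\<lambda>p. pd j (pd l f) (X (fst p) (snd p)))"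
      using Ck_continuous[OF Ck_Suc_pd[OF fl j]] cont_X by (rule continuous_on_compose2) auto
  qed
  moreover have "X (x j) (x l) = x" unfolding X_def by simp
  ultimately show ?thesis by simp
qed simp

section \<open>Estimates for linear systems and circle maps\<close>

lemma diag_dominant_abs_le:
  fixes A :: "nat \<Rightarrow> nat \<Rightarrow> real" and v :: "nat \<Rightarrow> real"
  assumes S: "finite S" and m: "m \<in> S"
    and diag: "\<And>m. m \<in> S \<Longrightarrow> \<kappa> \<le> \<bar>A m m\<bar>"
    and off: "\<And>m j. m \<in> S \<Longrightarrow> j \<in> S \<Longrightarrow> j \<noteq> m \<Longrightarrow> \<bar>A m j\<bar> \<le> e"
    and Av: "\<And>m. m \<in> S \<Longrightarrow> \<bar>\<Sum>j\<in>S. A m j * v j\<bar> \<le> r"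
    and gap: "\<kappa> - real (card S) * e \<ge> 1" and e: "e \<ge> 0"
  shows "\<bar>v m\<bar> \<le> r"
proof -
  define M where "M = Max ((\<lambda>j. \<bar>v j\<bar>) ` S)"
  have max: "\<bar>v j\<bar> \<le> M" if "j \<in> S" for j
    using S that by (simp add: M_def)
  have "M \<in> (\<lambda>j. \<bar>v j\<bar>) ` S"
    using S m unfolding M_def by (intro Max_in) auto
  \<comment> \<open>the row in which v attains its largest component\<close>
  then obtain m0 where m0: "m0 \<in> S" and M: "M = \<bar>v m0\<bar>" by auto
  have "\<bar>\<Sum>j\<in>S - {m0}. A m0 j * v j\<bar> \<le> (\<Sum>j\<in>S - {m0}. e * M)"
  proof (rule order_trans[OF sum_abs sum_mono])
    fix j assume "j \<in> S - {m0}"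
    then show "\<bar>A m0 j * v j\<bar> \<le> e * M"
      unfolding abs_mult using off[OF m0, of j] max[of j] e by (auto intro: mult_mono)
  qed
  also have "\<dots> \<le> real (card S) * e * M"
    using S e card_Diff1_le[of S m0] unfolding M sum_constant mult.assoc
    by (intro mult_right_mono) simp_all
  finally have off_sum: "\<bar>\<Sum>j\<in>S - {m0}. A m0 j * v j\<bar> \<le> real (card S) * e * M" .
  have "\<kappa> * M \<le> \<bar>A m0 m0 * v m0\<bar>"
    using diag[OF m0] by (simp add: M abs_mult mult_right_mono)
  also have "\<dots> \<le> \<bar>\<Sum>j\<in>S. A m0 j * v j\<bar> + \<bar>\<Sum>j\<in>S - {m0}. A m0 j * v j\<bar>"
    using S m0 by (simp add: sum.remove)
  also have "\<dots> \<le> r + real (card S) * e * M" using Av[OF m0] off_sum by linarith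
  finally have "(\<kappa> - real (card S) * e) * M \<le> r" by (simp add: algebra_simps)
  moreover have "M \<le> (\<kappa> - real (card S) * e) * M"
    using mult_right_mono[OF gap, of M] by (simp add: M)
  ultimately show ?thesis using max[OF m] by linarith
qed

lemma quadratic_form_off_diag_bound:
  fixes c :: "nat \<Rightarrow> nat \<Rightarrow> real" and v :: "nat \<Rightarrow> real"
  assumes p: "p < N" and b: "b \<ge> 0"
    and c: "\<And>k j. k < N \<Longrightarrow> j < N \<Longrightarrow> (k, j) \<noteq> (p, p) \<Longrightarrow> \<bar>c k j\<bar> \<le> b"
  shows "\<bar>(\<Sum>j<N. \<Sum>k<N. c k j * v k * v j) - c p p * v p * v p\<bar> \<le> b * (\<Sum>j<N. \<bar>v j\<bar>)\<^sup>2"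
proof -
  define c' where "c' k j = (if (k, j) = (p, p) then 0 else c k j)" for k j
  have "(\<Sum>j<N. \<Sum>k<N. c k j * v k * v j) =
      (\<Sum>j<N. \<Sum>k<N. c' k j * v k * v j) + (\<Sum>j<N. \<Sum>k<N. if (k, j) = (p, p) then c p p * v p * v p else 0)"
    unfolding sum.distrib[symmetric] c'_def by (intro sum.cong) auto
  also have "(\<Sum>j<N. \<Sum>k<N. if (k, j) = (p, p) then c p p * v p * v p else 0) = c p p * v p * v p"
  proof -
    have "(\<Sum>k<N. if (k, j) = (p, p) then c p p * v p * v p else 0) = (if j = p then c p p * v p * v p else 0)"
      for j using p by (cases "j = p") auto
    then show ?thesis using p by simp
  qed
  finally have "(\<Sum>j<N. \<Sum>k<N. c k j * v k * v j) - c p p * v p * v p = (\<Sum>j<N. \<Sum>k<N. c' k j * v k * v j)"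
    by simp
  also have "\<bar>\<dots>\<bar> \<le> (\<Sum>j<N. \<Sum>k<N. b * (\<bar>v k\<bar> * \<bar>v j\<bar>))"
  proof (intro order_trans[OF sum_abs sum_mono] order_trans[OF sum_abs sum_mono])
    fix j k assume "j \<in> {..<N}" "k \<in> {..<N}"
    then have "\<bar>c' k j\<bar> \<le> b" using c b by (simp add: c'_def)
    then show "\<bar>c' k j * v k * v j\<bar> \<le> b * (\<bar>v k\<bar> * \<bar>v j\<bar>)"
      by (simp add: abs_mult mult.assoc mult_right_mono)
  qed
  also have "\<dots> = b * (\<Sum>j<N. \<bar>v j\<bar>)\<^sup>2"
    by (simp add: power2_eq_square sum_product sum_distrib_left mult.commute)
  finally show ?thesis .
qed

lemma DERIV_abs_diff_le:
  fixes g :: "real \<Rightarrow> real"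
  assumes "\<And>t. (g has_real_derivative g' t) (at t)" "\<And>t. \<bar>g' t\<bar> \<le> B"
  shows "\<bar>g b - g a\<bar> \<le> B * \<bar>b - a\<bar>"
  using field_differentiable_bound[of UNIV g g' B b a] assms by simp

lemma periodic_eq_frac:
  fixes g :: "real \<Rightarrow> 'a"
  assumes "\<And>s. g (s + 1) = g s"
  shows "g t = g (frac t)"
proof -
  have nat_shift: "g (s + real n) = g s" for s n
  proof (induction n)
    case (Suc n)
    have "s + real (Suc n) = (s + real n) + 1" by simp
    then show ?case using assms Suc by metis
  qed simp
  have "g (s + of_int z) = g s" for s z
  proof (cases "z \<ge> 0")
    case True
    then show ?thesis using nat_shift[of s "nat z"] by simp
  next
    case False
    then show ?thesis using nat_shift[of "s + of_int z" "nat (- z)"] by simp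
  qed
  then show ?thesis using frac_def[of t] by (metis diff_add_cancel)
qed

lemma dC2_le:
  assumes g: "\<And>t. (g has_real_derivative g' t) (at t)" "\<And>t. (g' has_real_derivative g'' t) (at t)"
    and h: "\<And>t. (h has_real_derivative h' t) (at t)" "\<And>t. (h' has_real_derivative h'' t) (at t)"
    and bounds: "\<And>t. \<bar>g t - h t\<bar> \<le> B" "\<And>t. \<bar>g' t - h' t\<bar> \<le> B" "\<And>t. \<bar>g'' t - h'' t\<bar> \<le> B"
  shows "dC2 g h \<le> ereal B"
proof -
  have derivs: "deriv g = g'" "deriv g' = g''" "deriv h = h'" "deriv h' = h''"
    using g h by (simp_all add: fun_eq_iff DERIV_imp_deriv)
  have "dC2 g h \<le> (SUP t. ereal (max \<bar>g t - h t - 0\<bar> (max \<bar>g' t - h' t\<bar> \<bar>g'' t - h'' t\<bar>)))"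
    unfolding dC2_def derivs by (rule INF_lower) simp
  also have "\<dots> \<le> ereal B"
    using bounds by (intro SUP_least) simp
  finally show ?thesis .
qed

section \<open>The image of a line under \<open>\<Phi>\<^sub>i\<close>\<close>

text \<open>\<open>Phi_line t\<close> is \<open>\<Phi>\<^sub>i(t; x')\<close>, where \<open>x'\<close> are the coordinates of \<open>x\<close> other than the
  \<open>i\<close>-th; \<open>dPhi\<close> and \<open>ddPhi\<close> are its first two derivatives in \<open>t\<close>, and \<open>F (Phi_line t) m\<close> is \<open>G\<^sub>m\<close>.
  The assumption \<open>N \<ge> 3\<close> only serves to find a third index in \<open>pd3_le\<close>.\<close>

locale straightening =
  fixes N :: nat and E \<kappa> K :: real
    and F P :: "(nat \<Rightarrow> real) \<Rightarrow> nat \<Rightarrow> real" and i :: nat and x :: "nat \<Rightarrow> real"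
  assumes gap: "\<kappa> - E > 1" and N_ge_3: "N \<ge> 3" and E_less_N: "E < real N"
    and H1: "H1 N E \<kappa> F" and H2: "H2 N E K F" and i: "i < N" and Phi: "Phi_lift N F i P"
begin

definition eps :: real where "eps = E / real N"

abbreviation "others \<equiv> {..<N} - {i}"
abbreviation "Fc m \<equiv> \<lambda>z. F z m"
abbreviation "Phi_line t \<equiv> P (x(i := t))"
abbreviation "dPhi m t \<equiv> pd i (\<lambda>z. P z m) (x(i := t))"
abbreviation "ddPhi m t \<equiv> pd i (pd i (\<lambda>z. P z m)) (x(i := t))"

lemma F_Ck: "m < N \<Longrightarrow> Ck N (Suc (Suc (Suc 0))) (Fc m)"
  using H2 by (simp add: H2_def torus_map_lift_def numeral_3_eq_3)

lemma P_Ck: "m < N \<Longrightarrow> Ck N (Suc (Suc 0)) (\<lambda>z. P z m)"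
  using Phi by (simp add: Phi_lift_def torus_map_lift_def numeral_2_eq_2)

lemma diag_gt: "m < N \<Longrightarrow> \<kappa> < \<bar>pd m (Fc m) z\<bar>"
  using H1 by (simp add: H1_def)

lemma off_diag_lt: "m < N \<Longrightarrow> j < N \<Longrightarrow> j \<noteq> m \<Longrightarrow> \<bar>pd j (Fc m) z\<bar> < eps"
  using H1 by (simp add: H1_def eps_def)

lemma eps_pos: "0 < eps"
proof -
  obtain j where "j < N" "j \<noteq> i"
    using N_ge_3 by (metis Suc_le_lessD less_trans_Suc n_not_Suc_n numeral_3_eq_3 zero_less_Suc)
  then show ?thesis using off_diag_lt[OF i, of j x] by linarith
qed

lemma E_pos: "0 < E"
  using eps_pos by (simp add: eps_def zero_less_divide_iff)

lemma eps_less_1: "eps < 1"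
  using E_less_N E_pos by (simp add: eps_def)

lemma card_others_eps: "real (card others) * eps \<le> E"
proof -
  have "real (card others) * eps \<le> real N * eps"
    using eps_pos i by (intro mult_right_mono) (simp_all add: card_Diff_singleton)
  then show ?thesis using N_ge_3 by (simp add: eps_def)
qed

lemma sum_split_i: "(\<Sum>j<N. h j) = h i + (\<Sum>j\<in>others. h j)"
  using i by (simp add: sum.remove)

lemma pd2_diag_le: "m < N \<Longrightarrow> \<bar>pd m (pd m (Fc m)) z\<bar> \<le> K"
  using H2 by (simp add: H2_def)

lemma K_nonneg: "0 \<le> K"
  using pd2_diag_le[OF i, of x] by linarith

lemma pd2_off_diag_le:
  assumes "m < N" "j < N" "k < N" "(k, j) \<noteq> (m, m)"
  shows "\<bar>pd k (pd j (Fc m)) z\<bar> \<le> eps"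
proof (cases "j = m")
  case True
  then have "pd k (pd j (Fc m)) z = pd j (pd k (Fc m)) z" and "k \<noteq> m"
    using Ck_pd_commute[OF F_Ck, of m j k z] assms by auto
  then show ?thesis using H2 assms True by (simp add: H2_def eps_def)
qed (use H2 assms in \<open>simp add: H2_def eps_def\<close>)

lemma pd3_le:
  assumes "l < N" "j < N" "l \<noteq> j"
  shows "\<bar>pd l (pd j (pd j (Fc j))) z\<bar> \<le> eps"
proof -
  have "\<exists>k\<in>{0, 1, 2 :: nat}. k \<noteq> l \<and> k \<noteq> j" using assms(3) by auto
  then obtain k where k: "k \<in> {0, 1, 2}" "k \<noteq> l" "k \<noteq> j" by blast
  then have "k < N" using N_ge_3 by auto
  then show ?thesis using H2 assms k by (simp add: H2_def eps_def)
qed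

lemma Phi_line_has_derivative:
  "m < N \<Longrightarrow> ((\<lambda>s. Phi_line s m) has_real_derivative dPhi m t) (at t)"
  using Ck_has_pd[OF P_Ck i, of m x t] by simp

lemma dPhi_has_derivative:
  assumes "m < N"
  shows "((\<lambda>s. dPhi m s) has_real_derivative ddPhi m t) (at t)"
  using Ck_has_pd[OF Ck_Suc_pd[OF P_Ck[OF assms] i] i, of x t] by simp

lemma Phi_line_i: "Phi_line t i = t"
  using Phi by (simp add: Phi_lift_def)

lemma dPhi_i: "dPhi i t = 1"
  using Phi_line_has_derivative[OF i, of t] by (simp add: Phi_line_i DERIV_unique[OF DERIV_ident])

lemma ddPhi_i: "ddPhi i t = 0"
  using dPhi_has_derivative[OF i, of t] by (simp add: dPhi_i DERIV_unique[OF DERIV_const])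

definition dG :: "nat \<Rightarrow> real \<Rightarrow> real" where
  "dG m t = (\<Sum>j<N. pd j (Fc m) (Phi_line t) * dPhi j t)"

definition quadG :: "nat \<Rightarrow> real \<Rightarrow> real" where
  "quadG m t = (\<Sum>j<N. \<Sum>k<N. pd k (pd j (Fc m)) (Phi_line t) * dPhi k t * dPhi j t)"

definition ddG :: "nat \<Rightarrow> real \<Rightarrow> real" where
  "ddG m t = quadG m t + (\<Sum>j<N. pd j (Fc m) (Phi_line t) * ddPhi j t)"

lemma G_has_derivative: "m < N \<Longrightarrow> ((\<lambda>t. F (Phi_line t) m) has_real_derivative dG m t) (at t)"
  unfolding dG_def by (intro Ck_chain_rule[OF F_Ck] Phi_line_has_derivative)

lemma dG_has_derivative:
  assumes m: "m < N"
  shows "(dG m has_real_derivative ddG m t) (at t)"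
proof -
  have "((\<lambda>t. pd j (Fc m) (Phi_line t)) has_real_derivative
      (\<Sum>k<N. pd k (pd j (Fc m)) (Phi_line t) * dPhi k t)) (at t)" if "j < N" for j
    by (intro Ck_chain_rule[OF Ck_Suc_pd[OF F_Ck[OF m] that]] Phi_line_has_derivative)
  then have "(dG m has_real_derivative
      (\<Sum>j<N. (\<Sum>k<N. pd k (pd j (Fc m)) (Phi_line t) * dPhi k t) * dPhi j t
        + ddPhi j t * pd j (Fc m) (Phi_line t))) (at t)"
    unfolding dG_def[abs_def] by (intro DERIV_sum DERIV_mult dPhi_has_derivative) auto
  then show ?thesis
    by (rule DERIV_cong) (simp add: ddG_def quadG_def sum.distrib sum_distrib_left sum_distrib_right mult_ac)
qed

lemma G_const: "m < N \<Longrightarrow> m \<noteq> i \<Longrightarrow> F (Phi_line t) m = F (x(i := 0)) m"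
  using Phi by (simp add: Phi_lift_def)

lemma dG_eq_0: "m < N \<Longrightarrow> m \<noteq> i \<Longrightarrow> dG m t = 0"
  using G_has_derivative[of m t] G_const by (simp add: DERIV_unique[OF DERIV_const])

lemma ddG_eq_0:
  assumes "m < N" "m \<noteq> i"
  shows "ddG m t = 0"
proof -
  have "dG m = (\<lambda>_. 0)" using dG_eq_0[OF assms] by auto
  then show ?thesis using dG_has_derivative[OF assms(1), of t] by (simp add: DERIV_unique[OF DERIV_const])
qed

lemma dG_split: "dG m t = pd i (Fc m) (Phi_line t) + (\<Sum>j\<in>others. pd j (Fc m) (Phi_line t) * dPhi j t)"
  unfolding dG_def sum_split_i by (simp add: dPhi_i)

lemma ddG_split: "ddG m t = quadG m t + (\<Sum>j\<in>others. pd j (Fc m) (Phi_line t) * ddPhi j t)"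
  unfolding ddG_def sum_split_i by (simp add: ddPhi_i)

lemma sum_others_le:
  assumes "\<And>j. j \<in> others \<Longrightarrow> \<bar>a j\<bar> \<le> eps" "\<And>j. j \<in> others \<Longrightarrow> \<bar>b j\<bar> \<le> B" "0 \<le> B"
  shows "\<bar>\<Sum>j\<in>others. a j * b j\<bar> \<le> E * B"
proof -
  have "\<bar>\<Sum>j\<in>others. a j * b j\<bar> \<le> (\<Sum>j\<in>others. eps * B)"
    using assms eps_pos by (intro order_trans[OF sum_abs sum_mono]) (auto simp: abs_mult intro: mult_mono)
  also have "\<dots> \<le> E * B"
    using card_others_eps assms(3) by (simp add: mult_right_mono flip: mult.assoc)
  finally show ?thesis .
qed

text \<open>Since \<open>dG m t = 0\<close> for \<open>m \<noteq> i\<close>, the \<open>dPhi j t\<close> with \<open>j \<noteq> i\<close> solve a diagonally dominant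
  system whose right-hand side \<open>-pd i (Fc m)\<close> is small; the same holds for \<open>ddPhi\<close> below.\<close>

lemma dPhi_le:
  assumes "j \<in> others"
  shows "\<bar>dPhi j t\<bar> \<le> eps"
proof (rule diag_dominant_abs_le[where A = "\<lambda>m j. pd j (Fc m) (Phi_line t)" and v = "\<lambda>j. dPhi j t"
      and S = others and \<kappa> = \<kappa> and e = eps])
  fix m assume m: "m \<in> others"
  have "(\<Sum>j\<in>others. pd j (Fc m) (Phi_line t) * dPhi j t) = - pd i (Fc m) (Phi_line t)"
    using dG_split[of m t] dG_eq_0[of m t] m by simp
  then show "\<bar>\<Sum>j\<in>others. pd j (Fc m) (Phi_line t) * dPhi j t\<bar> \<le> eps"
    using off_diag_lt[of m i] m i by (simp add: less_imp_le)
qed (use assms diag_gt off_diag_lt card_others_eps gap eps_pos in \<open>auto intro: less_imp_le\<close>)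

lemma sum_abs_dPhi_le: "(\<Sum>j<N. \<bar>dPhi j t\<bar>) \<le> 1 + E"
proof -
  have "(\<Sum>j\<in>others. \<bar>dPhi j t\<bar>) \<le> real (card others) * eps"
    using sum_mono[of others "\<lambda>j. \<bar>dPhi j t\<bar>" "\<lambda>_. eps"] dPhi_le by simp
  then show ?thesis using card_others_eps by (simp add: sum_split_i dPhi_i)
qed

lemma quadG_diag_le:
  assumes m: "m < N"
  shows "\<bar>quadG m t - pd m (pd m (Fc m)) (Phi_line t) * dPhi m t * dPhi m t\<bar> \<le> eps * (1 + E)\<^sup>2"
proof -
  have "\<bar>quadG m t - pd m (pd m (Fc m)) (Phi_line t) * dPhi m t * dPhi m t\<bar>
      \<le> eps * (\<Sum>j<N. \<bar>dPhi j t\<bar>)\<^sup>2"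
    unfolding quadG_def using m eps_pos pd2_off_diag_le[OF m]
    by (intro quadratic_form_off_diag_bound) auto
  also have "\<dots> \<le> eps * (1 + E)\<^sup>2"
    using sum_abs_dPhi_le[of t] eps_pos by (intro mult_left_mono power_mono) (auto intro: sum_nonneg)
  finally show ?thesis .
qed

lemma quadG_le:
  assumes m: "m \<in> others"
  shows "\<bar>quadG m t\<bar> \<le> eps * ((1 + E)\<^sup>2 + K)"
proof -
  have "\<bar>dPhi m t * dPhi m t\<bar> \<le> eps * eps"
    unfolding abs_mult by (intro mult_mono) (use dPhi_le[OF m] eps_pos in auto)
  also have "\<dots> \<le> eps" using eps_pos eps_less_1 by simp
  finally have "\<bar>pd m (pd m (Fc m)) (Phi_line t) * dPhi m t * dPhi m t\<bar> \<le> K * eps"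
    using pd2_diag_le[of m] K_nonneg m unfolding mult.assoc abs_mult[of _ "dPhi m t * dPhi m t"]
    by (intro mult_mono) auto
  then show ?thesis using quadG_diag_le[of m t] m by (simp add: algebra_simps)
qed

lemma ddPhi_le:
  assumes "j \<in> others"
  shows "\<bar>ddPhi j t\<bar> \<le> eps * ((1 + E)\<^sup>2 + K)"
proof (rule diag_dominant_abs_le[where A = "\<lambda>m j. pd j (Fc m) (Phi_line t)" and v = "\<lambda>j. ddPhi j t"
      and S = others and \<kappa> = \<kappa> and e = eps])
  fix m assume m: "m \<in> others"
  have "(\<Sum>j\<in>others. pd j (Fc m) (Phi_line t) * ddPhi j t) = - quadG m t"
    using ddG_split[of m t] ddG_eq_0[of m t] m by simp
  then show "\<bar>\<Sum>j\<in>others. pd j (Fc m) (Phi_line t) * ddPhi j t\<bar> \<le> eps * ((1 + E)\<^sup>2 + K)"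
    using quadG_le[OF m] by simp
qed (use assms diag_gt off_diag_lt card_others_eps gap eps_pos in \<open>auto intro: less_imp_le\<close>)

lemma Phi_line_lipschitz:
  assumes "m \<in> others"
  shows "\<bar>Phi_line b m - Phi_line a m\<bar> \<le> eps * \<bar>b - a\<bar>"
  by (rule DERIV_abs_diff_le[where g' = "dPhi m"]) (use assms Phi_line_has_derivative dPhi_le in blast)+

lemma Phi_line_periodic:
  assumes m: "m \<in> others"
  shows "Phi_line (s + 1) m = Phi_line s m"
proof -
  have "Phi_line (s + 1) m - Phi_line s m \<in> \<int>"
    using Phi m i unfolding Phi_lift_def torus_map_lift_def
    by (metis (no_types, lifting) DiffE fun_upd_same fun_upd_upd lessThan_iff)
  \<comment> \<open>an integer, yet of size at most \<open>eps < 1\<close>\<close>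
  moreover have "\<bar>Phi_line (s + 1) m - Phi_line s m\<bar> < 1"
    using Phi_line_lipschitz[OF m, of "s + 1" s] eps_less_1 by simp
  ultimately show ?thesis using Ints_nonzero_abs_less1 by fastforce
qed

lemma Phi_line_near:
  assumes m: "m \<in> others"
  shows "\<bar>Phi_line t m - x m\<bar> \<le> eps"
proof -
  have "Phi_line t m = Phi_line (frac t) m"
    using Phi_line_periodic[OF m] by (rule periodic_eq_frac)
  moreover have "Phi_line 0 m = x m"
    using Phi m unfolding Phi_lift_def same_upto_def by (metis DiffE fun_upd_other lessThan_iff singletonI)
  moreover have "eps * \<bar>frac t - 0\<bar> \<le> eps"
    using eps_pos frac_lt_1[of t] by simp
  ultimately show ?thesis using Phi_line_lipschitz[OF m, of "frac t" 0] by simp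
qed

lemma close_along_line:
  assumes f: "Ck N (Suc k) f" and pd_f: "\<And>j u. j \<in> others \<Longrightarrow> \<bar>pd j f u\<bar> \<le> eps"
  shows "\<bar>f (Phi_line t) - f (x(i := t))\<bar> \<le> E * eps"
proof -
  have "\<bar>f (Phi_line t) - f (x(i := t))\<bar> \<le> (\<Sum>j<N. eps * \<bar>Phi_line t j - (x(i := t)) j\<bar>)"
    using pd_f Phi_line_i by (intro Ck_abs_diff_le[OF f]) force
  also have "\<dots> \<le> (\<Sum>j<N. eps * eps)"
    using Phi_line_near Phi_line_i eps_pos by (intro sum_mono mult_left_mono) auto
  also have "\<dots> = E * eps" using N_ge_3 by (simp add: eps_def)
  finally show ?thesis .
qed

lemma G_close: "\<bar>F (Phi_line t) i - F (x(i := t)) i\<bar> \<le> E * eps"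
  using off_diag_lt[OF i] by (intro close_along_line[OF F_Ck[OF i]]) (simp add: less_imp_le)

lemma dG_close: "\<bar>dG i t - pd i (Fc i) (x(i := t))\<bar> \<le> 2 * E * eps"
proof -
  have "\<bar>pd i (Fc i) (Phi_line t) - pd i (Fc i) (x(i := t))\<bar> \<le> E * eps"
    using pd2_off_diag_le[OF i i] by (intro close_along_line[OF Ck_Suc_pd[OF F_Ck[OF i] i]]) auto
  moreover have "\<bar>\<Sum>j\<in>others. pd j (Fc i) (Phi_line t) * dPhi j t\<bar> \<le> E * eps"
    using off_diag_lt[OF i] dPhi_le eps_pos by (intro sum_others_le) (auto intro: less_imp_le)
  ultimately show ?thesis unfolding dG_split by linarith
qed

lemma ddG_close: "\<bar>ddG i t - pd i (pd i (Fc i)) (x(i := t))\<bar> \<le> eps * (E + (1 + E) ^ 3 + E * K)"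
proof -
  have "\<bar>quadG i t - pd i (pd i (Fc i)) (Phi_line t)\<bar> \<le> eps * (1 + E)\<^sup>2"
    using quadG_diag_le[OF i, of t] by (simp add: dPhi_i)
  moreover have "\<bar>pd i (pd i (Fc i)) (Phi_line t) - pd i (pd i (Fc i)) (x(i := t))\<bar> \<le> E * eps"
    using pd3_le[OF _ i]
    by (intro close_along_line[OF Ck_Suc_pd[OF Ck_Suc_pd[OF F_Ck[OF i] i] i]]) auto
  moreover have "\<bar>\<Sum>j\<in>others. pd j (Fc i) (Phi_line t) * ddPhi j t\<bar> \<le> E * (eps * ((1 + E)\<^sup>2 + K))"
    using off_diag_lt[OF i] ddPhi_le eps_pos K_nonneg by (intro sum_others_le) (auto intro: less_imp_le)
  ultimately show ?thesis
    unfolding ddG_split by (simp add: power3_eq_cube power2_eq_square algebra_simps)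
qed

lemma dC2_bound:
  "dC2 (\<lambda>t. F (P (x(i := t))) i) (\<lambda>t. F (x(i := t)) i) \<le> ereal (eps * (2 * (1 + E) ^ 3 + E * K))"
proof (rule dC2_le)
  have "1 + E \<le> (1 + E) ^ 3"
    using power_increasing[of 1 3 "1 + E"] E_pos by simp
  moreover have "0 \<le> E * K" "E * eps \<le> 2 * E * eps" using E_pos eps_pos K_nonneg by simp_all
  ultimately have "2 * E * eps \<le> eps * (2 * (1 + E) ^ 3 + E * K)"
    and "eps * (E + (1 + E) ^ 3 + E * K) \<le> eps * (2 * (1 + E) ^ 3 + E * K)"
    using eps_pos by (simp_all add: mult.commute mult_left_mono)
  then show "\<bar>F (P (x(i := t))) i - F (x(i := t)) i\<bar> \<le> eps * (2 * (1 + E) ^ 3 + E * K)"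
    and "\<bar>dG i t - pd i (Fc i) (x(i := t))\<bar> \<le> eps * (2 * (1 + E) ^ 3 + E * K)"
    and "\<bar>ddG i t - pd i (pd i (Fc i)) (x(i := t))\<bar> \<le> eps * (2 * (1 + E) ^ 3 + E * K)" for t
    using G_close[of t] dG_close[of t] ddG_close[of t] \<open>E * eps \<le> 2 * E * eps\<close> by linarith+
  show "((\<lambda>t. F (x(i := t)) i) has_real_derivative pd i (Fc i) (x(i := t))) (at t)"
    and "((\<lambda>t. pd i (Fc i) (x(i := t))) has_real_derivative pd i (pd i (Fc i)) (x(i := t))) (at t)" for t
    using Ck_has_pd[OF F_Ck[OF i] i] Ck_has_pd[OF Ck_Suc_pd[OF F_Ck[OF i] i] i] by blast+
qed (use G_has_derivative[OF i] dG_has_derivative[OF i] in blast)+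

end

theorem lemma4p3:
  fixes E \<kappa> K :: real
  assumes "\<kappa> - E > 1"
  shows "\<exists>C N0. \<forall>N \<ge> N0. \<forall>F i P.
           H1 N E \<kappa> F \<and> H2 N E K F \<and> i < N \<and> Phi_lift N F i P \<longrightarrow>
           (\<forall>x. dC2 (\<lambda>t. F (P (x(i := t))) i) (\<lambda>t. F (x(i := t)) i) \<le> ereal (C / real N))"
proof (intro exI[of _ "E * (2 * (1 + E) ^ 3 + E * K)"] exI[of _ "nat \<lceil>E\<rceil> + 3"] allI impI)
  fix N :: nat and F P :: "(nat \<Rightarrow> real) \<Rightarrow> nat \<Rightarrow> real" and i x
  assume N: "nat \<lceil>E\<rceil> + 3 \<le> N" and hyps: "H1 N E \<kappa> F \<and> H2 N E K F \<and> i < N \<and> Phi_lift N F i P"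
  have "E < real N" using N by linarith
  with assms N hyps interpret straightening N E \<kappa> K F P i x
    by unfold_locales auto
  show "dC2 (\<lambda>t. F (P (x(i := t))) i) (\<lambda>t. F (x(i := t)) i)
      \<le> ereal (E * (2 * (1 + E) ^ 3 + E * K) / real N)"
    using dC2_bound by (simp add: eps_def)
qed

end
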